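(* Let $Y\in\mathbb{C}^{(n\times n)\cdot d}$, let $f$ be an NC function uniformly analytic in a uniformly open neighbourhood of $Y$, and let $f_\ell$, $f_\omega$ and the coefficients $\hat f_{\alpha,\beta;\omega}$ be as in the context. Then there is a constant $C>0$ such that for all $\ell\in\mathbb{N}$, $$\Big(\sum_{\substack{\alpha,\beta\in\mathbb{F}^+_n,\ \omega\in\mathbb{F}^+_d\\ |\alpha|=|\beta|=\ell+1=|\omega|+1}}|\hat f_{\alpha,\beta;\omega}|^2\Big)^{1/(2\ell)}\le C\,\|f_\ell\|_{\mathrm{CB}}^{1/\ell}.$$
   Context: $\mathbb{C}^{(k\times k)\cdot d}$ denotes column $d$-tuples of $k\times k$ matrices, with $\|X\|_{\mathrm{col}}$ the operator norm of the stacked $kd\times k$ matrix; the uniform topology is generated by the sets $\bigsqcup_m\{X\in\mathbb{C}^{(mk\times mk)\cdot d}:\|X-I_m\otimes Z\|_{\mathrm{col}}<r\}$. An NC function on a set $\Omega\subseteq\bigsqcup_k\mathbb{C}^{(k\times k)\cdot d}$ closed under direct sums is a map $f$ with $f(X)\in\mathbb{C}^{k\times k}$ at level $k$, $f(X\oplus X')=f(X)\oplus f(X')$, and $f(S^{-1}XS)=S^{-1}f(X)S$ whenever $X,S^{-1}XS\in\Omega$; it is uniformly analytic if $\Omega$ is uniformly open and $f$ is locally bounded in the uniform topology. $\mathbb{F}^+_k$ is the free monoid of words in $\{1,\dots,k\}$. Such $f$ has a Taylor–Taylor expansion at $Y$: there are unique $|\omega|$-linear maps $f_\omega:(\mathbb{C}^{n\times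 n})^{|\omega|}\to\mathbb{C}^{n\times n}$ ($\omega\in\mathbb{F}^+_d$) with $f(X)=\sum_\omega f_\omega\circ(X-I_m\otimes Y)^{\odot\omega}$ for $X$ near $Y$, where for $\omega=w_1\cdots w_\ell$, $f_\omega\circ(H_{w_1}\odot\cdots\odot H_{w_\ell})$ means the $m\times m$ block matrix obtained by applying $f_\omega$ to the Haagerup product of the $m\times m$ block matrices $H_{w_i}$ over $\mathbb{C}^{n\times n}$. Let $f_\ell$ be the $\ell$-linear map on $(\mathbb{C}^{(n\times n)\cdot d})^\ell$, $f_\ell(H^{(1)},\dots,H^{(\ell)})=\sum_{|\omega|=\ell}f_\omega(H^{(1)}_{w_1},\dots,H^{(\ell)}_{w_\ell})$, and $\|f_\ell\|_{\mathrm{CB}}$ its completely bounded norm (in the sense of Christensen–Sinclair), i.e. the cb-norm of its linearization on the $\ell$-fold Haagerup tensor product $E\otimes_h\cdots\otimes_hE$, where $E=\mathbb{C}^{(n\times n)\cdot d}$ carries the column operator space structure ($E^{i\times j}$ normed as $\mathbb{C}^{ind\times jn}$). Each $f_\omega$, $|\omega|=\ell$, is written uniquely as $f_\omega(G_1,\dots,G_\ell)=\sum_{\alpha,\beta}\hat f_{\alpha,\beta;\omega}E_{a_0,b_0}G_1E_{a_1,b_1}\cdots G_\ell E_{a_\ell,b_\ell}$, the sum over words $\alpha=a_0\cdots a_\ell,\beta=b_0\cdots b_\ell\in\mathbb{F}^+_n$, with $E_{i,j}$ the matrix units of $\mathbb{C}^{n\times n}$ and $\hat f_{\alpha,\beta;\omega}\in\mathbb{C}$.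 *)

theory Defs
  imports Complex_Main "Jordan_Normal_Form.Matrix"
begin

text \<open>Points of the NC space are pairs (level k, tuple).\<close>

definition is_tup :: "nat \<Rightarrow> nat \<Rightarrow> complex mat list \<Rightarrow> bool" where
  "is_tup d k X \<longleftrightarrow> length X = d \<and> (\<forall>A\<in>set X. A \<in> carrier_mat k k)"

definition NCspace :: "nat \<Rightarrow> (nat \<times> complex mat list) set" where
  "NCspace d = {(k, X). k \<ge> 1 \<and> is_tup d k X}"

definition words :: "nat \<Rightarrow> nat \<Rightarrow> nat list set" where
  "words a l = {w. length w = l \<and> set w \<subseteq> {..<a}}"

definition vnorm :: "complex vec \<Rightarrow> real" where
  "vnorm v = sqrt (\<Sum>i<dim_vec v. (cmod (v $ i))\<^sup>2)"

definition opnorm :: "complex mat \<Rightarrow> real" where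
  "opnorm A = Sup {vnorm (A *\<^sub>v v) | v. v \<in> carrier_vec (dim_col A) \<and> vnorm v \<le> 1}"

text \<open>column stacking of a d-tuple of k x k matrices into a (d k) x k matrix\<close>
definition colstack :: "nat \<Rightarrow> complex mat list \<Rightarrow> complex mat" where
  "colstack k X = mat (length X * k) k (\<lambda>(i, j). (X ! (i div k)) $$ (i mod k, j))"

definition colnorm :: "nat \<Rightarrow> complex mat list \<Rightarrow> real" where
  "colnorm k X = opnorm (colstack k X)"

text \<open>I_m \<otimes> Z for a square matrix Z\<close>
definition ampl :: "nat \<Rightarrow> complex mat \<Rightarrow> complex mat" where
  "ampl m Z = mat (m * dim_row Z) (m * dim_row Z)
     (\<lambda>(i, j). if i div dim_row Z = j div dim_row Z
               then Z $$ (i mod dim_row Z, j mod dim_row Z) else 0)"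

definition tup_sub :: "complex mat list \<Rightarrow> complex mat list \<Rightarrow> complex mat list" where
  "tup_sub X Z = map2 (\<lambda>A B. A - B) X Z"

definition ubasic :: "nat \<Rightarrow> nat \<Rightarrow> complex mat list \<Rightarrow> real \<Rightarrow> (nat \<times> complex mat list) set" where
  "ubasic d k Z r = {(s, X). (s, X) \<in> NCspace d \<and>
      (\<exists>m\<ge>1. s = m * k \<and> colnorm s (tup_sub X (map (ampl m) Z)) < r)}"

definition ubasics :: "nat \<Rightarrow> (nat \<times> complex mat list) set set" where
  "ubasics d = {ubasic d k Z r | k Z r. (k, Z) \<in> NCspace d \<and> r > 0}"

definition uniformly_open :: "nat \<Rightarrow> (nat \<times> complex mat list) set \<Rightarrow> bool" where
  "uniformly_open d \<Omega> \<longleftrightarrow> \<Omega> \<subseteq> NCspace d \<and> generate_topology (ubasics d) \<Omega>"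

definition dsum :: "complex mat \<Rightarrow> complex mat \<Rightarrow> complex mat" where
  "dsum A B = four_block_mat A (0\<^sub>m (dim_row A) (dim_col B)) (0\<^sub>m (dim_row B) (dim_col A)) B"

definition dsum_closed :: "(nat \<times> complex mat list) set \<Rightarrow> bool" where
  "dsum_closed \<Omega> \<longleftrightarrow> (\<forall>k X k' X'. (k, X) \<in> \<Omega> \<and> (k', X') \<in> \<Omega> \<longrightarrow>
      (k + k', map2 dsum X X') \<in> \<Omega>)"

definition nc_function :: "nat \<Rightarrow> (nat \<times> complex mat list) set \<Rightarrow>
    (nat \<Rightarrow> complex mat list \<Rightarrow> complex mat) \<Rightarrow> bool" where
  "nc_function d \<Omega> f \<longleftrightarrow> \<Omega> \<subseteq> NCspace d \<and> dsum_closed \<Omega> \<and>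
     (\<forall>(k, X)\<in>\<Omega>. f k X \<in> carrier_mat k k) \<and>
     (\<forall>k X k' X'. (k, X) \<in> \<Omega> \<and> (k', X') \<in> \<Omega> \<longrightarrow>
        f (k + k') (map2 dsum X X') = dsum (f k X) (f k' X')) \<and>
     (\<forall>k X S T. (k, X) \<in> \<Omega> \<and> S \<in> carrier_mat k k \<and> T \<in> carrier_mat k k \<and>
        S * T = 1\<^sub>m k \<and> T * S = 1\<^sub>m k \<and> (k, map (\<lambda>A. T * A * S) X) \<in> \<Omega> \<longrightarrow>
        f k (map (\<lambda>A. T * A * S) X) = T * f k X * S)"

definition uniformly_analytic :: "nat \<Rightarrow> (nat \<times> complex mat list) set \<Rightarrow>
    (nat \<Rightarrow> complex mat list \<Rightarrow> complex mat) \<Rightarrow> bool" where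
  "uniformly_analytic d \<Omega> f \<longleftrightarrow> nc_function d \<Omega> f \<and> uniformly_open d \<Omega> \<and>
     (\<forall>p\<in>\<Omega>. \<exists>U. uniformly_open d U \<and> p \<in> U \<and> U \<subseteq> \<Omega> \<and>
        (\<exists>B. \<forall>(k, X)\<in>U. opnorm (f k X) \<le> B))"

definition blk :: "nat \<Rightarrow> complex mat \<Rightarrow> nat \<Rightarrow> nat \<Rightarrow> complex mat" where
  "blk n A p q = mat n n (\<lambda>(r, c). A $$ (p * n + r, q * n + c))"

definition paths :: "nat \<Rightarrow> nat \<Rightarrow> nat \<Rightarrow> nat \<Rightarrow> nat list set" where
  "paths m l a b = {ks. length ks = Suc l \<and> set ks \<subseteq> {..<m} \<and> ks ! 0 = a \<and> ks ! l = b}"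

text \<open>Haagerup-product amplification: phi applied to H_1 \<odot> ... \<odot> H_l, where the
  H_t are m x m block matrices over C^{n x n} (i.e. (m n) x (m n) matrices) and
  phi is an l-linear map on n x n matrices.  For l = 0 this gives I_m \<otimes> phi().\<close>
definition hamp :: "nat \<Rightarrow> nat \<Rightarrow> (complex mat list \<Rightarrow> complex mat) \<Rightarrow> complex mat list \<Rightarrow> complex mat" where
  "hamp n m \<phi> Hs = mat (m * n) (m * n) (\<lambda>(i, j).
     \<Sum>ks\<in>paths m (length Hs) (i div n) (j div n).
        \<phi> (map (\<lambda>t. blk n (Hs ! t) (ks ! t) (ks ! Suc t)) [0..<length Hs]) $$ (i mod n, j mod n))"

definition taylor_taylor :: "nat \<Rightarrow> nat \<Rightarrow> complex mat list \<Rightarrow> (nat \<times> complex mat list) set \<Rightarrow>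
    (nat \<Rightarrow> complex mat list \<Rightarrow> complex mat) \<Rightarrow> (nat list \<Rightarrow> complex mat list \<Rightarrow> complex mat) \<Rightarrow> bool" where
  "taylor_taylor d n Y \<Omega> f fw \<longleftrightarrow> (\<exists>r>0. ubasic d n Y r \<subseteq> \<Omega> \<and>
     (\<forall>m X. m \<ge> 1 \<and> (m * n, X) \<in> ubasic d n Y r \<longrightarrow>
        (\<forall>i j. i < m * n \<and> j < m * n \<longrightarrow>
           (\<lambda>l. \<Sum>\<omega>\<in>words d l.
               hamp n m (fw \<omega>) (map (\<lambda>w. tup_sub X (map (ampl m) Y) ! w) \<omega>) $$ (i, j))
           sums (f (m * n) X $$ (i, j)))))"

definition Eunit :: "nat \<Rightarrow> nat \<Rightarrow> nat \<Rightarrow> complex mat" where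
  "Eunit n i j = mat n n (\<lambda>(r, c). if r = i \<and> c = j then 1 else 0)"

fun mprod :: "nat \<Rightarrow> complex mat list \<Rightarrow> complex mat" where
  "mprod n [] = 1\<^sub>m n"
| "mprod n (A # As) = A * mprod n As"

definition emono :: "nat \<Rightarrow> nat list \<Rightarrow> nat list \<Rightarrow> complex mat list \<Rightarrow> complex mat" where
  "emono n \<alpha> \<beta> G = mprod n (Eunit n (\<alpha> ! 0) (\<beta> ! 0) #
     concat (map (\<lambda>t. [G ! t, Eunit n (\<alpha> ! Suc t) (\<beta> ! Suc t)]) [0..<length G]))"

definition coeff_rep :: "nat \<Rightarrow> nat \<Rightarrow> (nat list \<Rightarrow> complex mat list \<Rightarrow> complex mat) \<Rightarrow>
    (nat list \<Rightarrow> nat list \<Rightarrow> nat list \<Rightarrow> complex) \<Rightarrow> bool" where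
  "coeff_rep d n fw hf \<longleftrightarrow> (\<forall>l. \<forall>\<omega>\<in>words d l. \<forall>G.
     length G = l \<and> (\<forall>A\<in>set G. A \<in> carrier_mat n n) \<longrightarrow>
       fw \<omega> G \<in> carrier_mat n n \<and>
       (\<forall>i<n. \<forall>j<n. fw \<omega> G $$ (i, j) =
          (\<Sum>\<alpha>\<in>words n (Suc l). \<Sum>\<beta>\<in>words n (Suc l). hf \<alpha> \<beta> \<omega> * emono n \<alpha> \<beta> G $$ (i, j))))"

definition fl_amp :: "nat \<Rightarrow> nat \<Rightarrow> (nat list \<Rightarrow> complex mat list \<Rightarrow> complex mat) \<Rightarrow>
    nat \<Rightarrow> complex mat list list \<Rightarrow> complex mat" where
  "fl_amp d n fw p Xs = mat (p * n) (p * n) (\<lambda>(i, j).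
     \<Sum>\<omega>\<in>words d (length Xs).
        hamp n p (fw \<omega>) (map (\<lambda>t. Xs ! t ! (\<omega> ! t)) [0..<length Xs]) $$ (i, j))"

text \<open>Christensen-Sinclair completely bounded norm of f_l, E with column structure\<close>
definition cbnorm :: "nat \<Rightarrow> nat \<Rightarrow> (nat list \<Rightarrow> complex mat list \<Rightarrow> complex mat) \<Rightarrow> nat \<Rightarrow> real" where
  "cbnorm d n fw l = Sup {opnorm (fl_amp d n fw p Xs) | p Xs. p \<ge> 1 \<and> length Xs = l \<and>
      (\<forall>X\<in>set Xs. is_tup d (p * n) X \<and> colnorm (p * n) X \<le> 1)}"

end

theory Submission
  imports Defs "HOL-Analysis.L2_Norm"
begin

text \<open>
  Amplified to level \<open>p\<close> and evaluated on column contractions, \<open>f_l\<close> is the linear combination,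
  with coefficients \<open>hat f(\<alpha>,\<beta>,\<omega>)\<close>, of the products
  \<open>(I_p \<otimes> E_{a0,b0}) H_1 (I_p \<otimes> E_{a1,b1}) ... H_l (I_p \<otimes> E_{al,bl})\<close> of contractions; hence
  its cb-norm is finite. Conversely, at level 1 let the \<open>t\<close>-th argument be the tuple carrying the
  single matrix unit \<open>E_{\<beta>_t,\<alpha>_(t+1)}\<close> in slot \<open>\<omega>_t\<close>: the \<open>(\<alpha>_0, \<beta>_l)\<close> entry of the value of
  \<open>f_l\<close> is then exactly \<open>hat f(\<alpha>,\<beta>,\<omega>)\<close>, so every coefficient is bounded by the cb-norm.
  Summing the \<open>n^(2l+2) d^l\<close> squares and taking \<open>2l\<close>-th roots gives the claim with
  \<open>C = n^2 (d + 1)\<close>.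
\<close>

section \<open>Operator norms\<close>

lemma vnorm_eq_L2_set: "vnorm v = L2_set (\<lambda>i. cmod (v $ i)) {..<dim_vec v}"
  unfolding vnorm_def L2_set_def by simp

lemma vnorm_nonneg: "0 \<le> vnorm v"
  unfolding vnorm_eq_L2_set by (rule L2_set_nonneg)

lemma cmod_index_le_vnorm: "i < dim_vec v \<Longrightarrow> cmod (v $ i) \<le> vnorm v"
  unfolding vnorm_eq_L2_set by (rule member_le_L2_set) auto

lemma vnorm_smult: "vnorm (c \<cdot>\<^sub>v v) = cmod c * vnorm v"
  unfolding vnorm_eq_L2_set by (simp add: L2_set_right_distrib) (rule L2_set_cong, auto simp: norm_mult)

lemma vnorm_zero_vec [simp]: "vnorm (0\<^sub>v n) = 0"
  by (simp add: vnorm_def)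

lemma vnorm_eq_0_iff: "vnorm v = 0 \<longleftrightarrow> v = 0\<^sub>v (dim_vec v)"
proof
  assume "vnorm v = 0"
  then show "v = 0\<^sub>v (dim_vec v)"
    using cmod_index_le_vnorm[of _ v] by (intro eq_vecI) fastforce+
qed (metis vnorm_zero_vec)

lemma L2_set_sum_le:
  assumes "finite K"
  shows "L2_set (\<lambda>i. \<Sum>k\<in>K. f k i) A \<le> (\<Sum>k\<in>K. L2_set (f k) A)"
  using assms
proof (induction K rule: finite_induct)
  case (insert a K)
  have "L2_set (\<lambda>i. f a i + (\<Sum>k\<in>K. f k i)) A \<le> L2_set (f a) A + L2_set (\<lambda>i. \<Sum>k\<in>K. f k i) A"
    by (rule L2_set_triangle_ineq)
  with insert show ?case by simp
qed (simp add: L2_set_0')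

lemma vnorm_lincomb_le:
  assumes "finite K" and "w \<in> carrier_vec N" and "\<And>k. k \<in> K \<Longrightarrow> u k \<in> carrier_vec N"
    and "\<And>i. i < N \<Longrightarrow> w $ i = (\<Sum>k\<in>K. c k * u k $ i)"
  shows "vnorm w \<le> (\<Sum>k\<in>K. cmod (c k) * vnorm (u k))"
proof -
  have "vnorm w = L2_set (\<lambda>i. cmod (w $ i)) {..<N}"
    using assms(2) by (simp add: vnorm_eq_L2_set)
  also have "\<dots> \<le> L2_set (\<lambda>i. \<Sum>k\<in>K. cmod (c k) * cmod (u k $ i)) {..<N}"
    using assms(4) by (intro L2_set_mono) (auto intro!: order_trans[OF norm_sum] simp: norm_mult)
  also have "\<dots> \<le> (\<Sum>k\<in>K. L2_set (\<lambda>i. cmod (c k) * cmod (u k $ i)) {..<N})"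
    by (rule L2_set_sum_le[OF assms(1)])
  also have "\<dots> = (\<Sum>k\<in>K. cmod (c k) * vnorm (u k))"
  proof (rule sum.cong[OF refl])
    fix k assume "k \<in> K"
    then have "dim_vec (u k) = N" using assms(3) by auto
    then show "L2_set (\<lambda>i. cmod (c k) * cmod (u k $ i)) {..<N} = cmod (c k) * vnorm (u k)"
      by (simp add: vnorm_eq_L2_set L2_set_right_distrib)
  qed
  finally show ?thesis .
qed

lemma opnorm_bdd_above:
  "bdd_above {vnorm (A *\<^sub>v v) | v. v \<in> carrier_vec (dim_col A) \<and> vnorm v \<le> 1}"
proof (rule bdd_aboveI)
  fix x assume "x \<in> {vnorm (A *\<^sub>v v) | v. v \<in> carrier_vec (dim_col A) \<and> vnorm v \<le> 1}"
  then obtain v where x: "x = vnorm (A *\<^sub>v v)" and v: "v \<in> carrier_vec (dim_col A)" "vnorm v \<le> 1"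
    by blast
  have "x \<le> (\<Sum>i<dim_row A. cmod ((A *\<^sub>v v) $ i))"
    unfolding x vnorm_eq_L2_set dim_mult_mat_vec by (rule L2_set_le_sum) simp
  also have "\<dots> \<le> (\<Sum>i<dim_row A. \<Sum>j<dim_col A. cmod (A $$ (i, j)) * cmod (v $ j))"
    using v by (intro sum_mono) (auto intro!: order_trans[OF norm_sum]
        simp: scalar_prod_def lessThan_atLeast0 norm_mult)
  also have "\<dots> \<le> (\<Sum>i<dim_row A. \<Sum>j<dim_col A. cmod (A $$ (i, j)))"
    using v cmod_index_le_vnorm[of _ v] by (intro sum_mono mult_left_le) force+
  finally show "x \<le> (\<Sum>i<dim_row A. \<Sum>j<dim_col A. cmod (A $$ (i, j)))" .
qed

lemma vnorm_le_opnorm: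
  "v \<in> carrier_vec (dim_col A) \<Longrightarrow> vnorm v \<le> 1 \<Longrightarrow> vnorm (A *\<^sub>v v) \<le> opnorm A"
  unfolding opnorm_def by (rule cSup_upper[OF _ opnorm_bdd_above]) auto

lemma opnorm_nonneg: "0 \<le> opnorm A"
  using vnorm_le_opnorm[of "0\<^sub>v (dim_col A)" A] vnorm_nonneg order_trans
  by (fastforce simp: vnorm_def)

lemma opnorm_le:
  assumes "\<And>v. v \<in> carrier_vec (dim_col A) \<Longrightarrow> vnorm v \<le> 1 \<Longrightarrow> vnorm (A *\<^sub>v v) \<le> K"
  shows "opnorm A \<le> K"
  unfolding opnorm_def
proof (rule cSup_least)
  show "{vnorm (A *\<^sub>v v) | v. v \<in> carrier_vec (dim_col A) \<and> vnorm v \<le> 1} \<noteq> {}"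
    by (auto intro!: exI[of _ "0\<^sub>v (dim_col A)"] simp: vnorm_def)
qed (use assms in blast)

lemma vnorm_mult_mat_vec_le:
  assumes v: "v \<in> carrier_vec (dim_col A)"
  shows "vnorm (A *\<^sub>v v) \<le> opnorm A * vnorm v"
proof (cases "vnorm v = 0")
  case True
  then have "A *\<^sub>v v = 0\<^sub>v (dim_row A)"
    using v by (auto simp: vnorm_eq_0_iff)
  then show ?thesis by (simp add: opnorm_nonneg vnorm_nonneg)
next
  case False
  then have pos: "vnorm v > 0" using vnorm_nonneg[of v] by linarith
  let ?s = "complex_of_real (1 / vnorm v)"
  have "vnorm (A *\<^sub>v (?s \<cdot>\<^sub>v v)) \<le> opnorm A"
    using v pos by (intro vnorm_le_opnorm) (auto simp: vnorm_smult norm_divide)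
  moreover have "A *\<^sub>v (?s \<cdot>\<^sub>v v) = ?s \<cdot>\<^sub>v (A *\<^sub>v v)"
    using v by (intro mult_mat_vec[of _ "dim_row A" "dim_col A"]) auto
  ultimately show ?thesis
    using pos by (simp add: vnorm_smult norm_divide divide_le_eq mult.commute)
qed

lemma cmod_index_le_opnorm:
  assumes "i < dim_row A" "j < dim_col A"
  shows "cmod (A $$ (i, j)) \<le> opnorm A"
proof -
  let ?e = "unit_vec (dim_col A) j :: complex vec"
  have "vnorm ?e = 1"
  proof -
    have "(\<Sum>k<dim_col A. (cmod (?e $ k))\<^sup>2) = (\<Sum>k<dim_col A. if k = j then 1 else 0)"
      by (intro sum.cong) (auto simp: unit_vec_def)
    then show ?thesis using assms(2) by (simp add: vnorm_def)
  qed
  moreover have "(A *\<^sub>v ?e) $ i = A $$ (i, j)" using assms by simp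
  ultimately show ?thesis
    using assms cmod_index_le_vnorm[of i "A *\<^sub>v ?e"] vnorm_le_opnorm[of ?e A]
    by (fastforce intro: order_trans)
qed

lemma opnorm_mult_le:
  assumes A: "A \<in> carrier_mat r k" and B: "B \<in> carrier_mat k c"
  shows "opnorm (A * B) \<le> opnorm A * opnorm B"
proof (rule opnorm_le)
  fix v assume v: "v \<in> carrier_vec (dim_col (A * B))" and v1: "vnorm v \<le> 1"
  then have vc: "v \<in> carrier_vec c" using B by simp
  have "vnorm (A * B *\<^sub>v v) = vnorm (A *\<^sub>v (B *\<^sub>v v))"
    using A B vc by (simp add: assoc_mult_mat_vec)
  also have "\<dots> \<le> opnorm A * vnorm (B *\<^sub>v v)"
    using A B vc by (intro vnorm_mult_mat_vec_le) auto
  also have "\<dots> \<le> opnorm A * opnorm B"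
    using B vc v1 by (intro mult_left_mono vnorm_le_opnorm opnorm_nonneg) auto
  finally show "vnorm (A * B *\<^sub>v v) \<le> opnorm A * opnorm B" .
qed

lemma opnorm_one_le: "opnorm (1\<^sub>m k) \<le> 1"
  by (rule opnorm_le) simp

lemma mprod_carrier: "mprod k As \<in> carrier_mat k k" if "\<forall>A\<in>set As. A \<in> carrier_mat k k"
  using that by (induction As) auto

lemma opnorm_mprod_le_one:
  assumes "\<forall>A\<in>set As. A \<in> carrier_mat k k \<and> opnorm A \<le> 1"
  shows "opnorm (mprod k As) \<le> 1"
  using assms
proof (induction As)
  case (Cons A As)
  then have "opnorm (A * mprod k As) \<le> opnorm A * opnorm (mprod k As)"
    by (intro opnorm_mult_le[of _ k k _ k] mprod_carrier) auto
  also have "\<dots> \<le> 1"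
    using Cons by (intro mult_le_one opnorm_nonneg) auto
  finally show ?case by simp
qed (simp add: opnorm_one_le)

lemma opnorm_lincomb_le:
  assumes A: "A \<in> carrier_mat r c" and K: "finite K" and B: "\<And>k. k \<in> K \<Longrightarrow> B k \<in> carrier_mat r c"
    and entries: "\<And>i j. i < r \<Longrightarrow> j < c \<Longrightarrow> A $$ (i, j) = (\<Sum>k\<in>K. a k * B k $$ (i, j))"
  shows "opnorm A \<le> (\<Sum>k\<in>K. cmod (a k) * opnorm (B k))"
proof (rule opnorm_le)
  fix v assume v: "v \<in> carrier_vec (dim_col A)" and v1: "vnorm v \<le> 1"
  have vc: "v \<in> carrier_vec c" using v A by simp
  have "(A *\<^sub>v v) $ i = (\<Sum>k\<in>K. a k * (B k *\<^sub>v v) $ i)" if i: "i < r" for i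
  proof -
    have "(A *\<^sub>v v) $ i = (\<Sum>j<c. (\<Sum>k\<in>K. a k * B k $$ (i, j)) * v $ j)"
      using A vc i entries by (simp add: scalar_prod_def lessThan_atLeast0)
    also have "\<dots> = (\<Sum>k\<in>K. a k * (\<Sum>j<c. B k $$ (i, j) * v $ j))"
      by (simp add: sum_distrib_left sum_distrib_right mult.assoc sum.swap[of _ K])
    also have "\<dots> = (\<Sum>k\<in>K. a k * (B k *\<^sub>v v) $ i)"
    proof (rule sum.cong[OF refl])
      fix k assume "k \<in> K"
      then have "B k \<in> carrier_mat r c" by (rule B)
      then show "a k * (\<Sum>j<c. B k $$ (i, j) * v $ j) = a k * (B k *\<^sub>v v) $ i"
        using vc i by (simp add: scalar_prod_def lessThan_atLeast0)
    qed
    finally show ?thesis .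
  qed
  then have "vnorm (A *\<^sub>v v) \<le> (\<Sum>k\<in>K. cmod (a k) * vnorm (B k *\<^sub>v v))"
    using A vc by (intro vnorm_lincomb_le[OF K, of _ r]) (auto intro: mult_mat_vec_carrier[OF B])
  also have "\<dots> \<le> (\<Sum>k\<in>K. cmod (a k) * opnorm (B k))"
    using B vc v1 by (intro sum_mono mult_left_mono vnorm_le_opnorm) auto
  finally show "vnorm (A *\<^sub>v v) \<le> (\<Sum>k\<in>K. cmod (a k) * opnorm (B k))" .
qed

lemma mat_mult_index:
  "A \<in> carrier_mat r k \<Longrightarrow> B \<in> carrier_mat k c \<Longrightarrow> i < r \<Longrightarrow> j < c \<Longrightarrow>
    (A * B) $$ (i, j) = (\<Sum>m<k. A $$ (i, m) * B $$ (m, j))"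
  by (simp add: scalar_prod_def lessThan_atLeast0)

lemma block_index_less: "u < p \<Longrightarrow> z < n \<Longrightarrow> u * n + z < p * (n::nat)"
proof -
  assume "u < p" "z < n"
  then have "u * n + z < Suc u * n" by simp
  also have "\<dots> \<le> p * n" using \<open>u < p\<close> by (intro mult_le_mono1) simp
  finally show ?thesis .
qed

lemma block_eq_iff:
  assumes "b < (n::nat)"
  shows "j div n = q \<and> j mod n = b \<longleftrightarrow> j = q * n + b"
proof
  assume "j div n = q \<and> j mod n = b"
  then show "j = q * n + b" using div_mult_mod_eq[of j n] by simp
qed (use assms in simp)

lemma sum_lessThan_mult_blocks:
  fixes g :: "nat \<Rightarrow> 'a::comm_monoid_add"
  shows "(\<Sum>i<p * n. g i) = (\<Sum>u<p. \<Sum>z<n. g (u * n + z))"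
proof -
  have "(\<Sum>i<p * n. g i) = (\<Sum>u<p. sum g {u * n..<u * n + n})"
    using sum.nat_group[of g n p] by simp
  also have "\<dots> = (\<Sum>u<p. \<Sum>z<n. g (u * n + z))"
    using sum.shift_bounds_nat_ivl[of g 0 "u * n" n for u]
    by (simp add: add.commute lessThan_atLeast0)
  finally show ?thesis .
qed

lemma opnorm_selection_le_one:
  assumes A: "A \<in> carrier_mat r c" and S: "S \<subseteq> {..<r}" and inj: "inj_on \<sigma> S"
    and \<sigma>: "\<sigma> ` S \<subseteq> {..<c}"
    and entries: "\<And>i j. i < r \<Longrightarrow> j < c \<Longrightarrow> A $$ (i, j) = (if i \<in> S \<and> j = \<sigma> i then 1 else 0)"
  shows "opnorm A \<le> 1"
proof (rule opnorm_le)
  fix v assume v: "v \<in> carrier_vec (dim_col A)" and v1: "vnorm v \<le> 1"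
  have vc: "v \<in> carrier_vec c" using v A by simp
  have Av: "(A *\<^sub>v v) $ i = (if i \<in> S then v $ \<sigma> i else 0)" if i: "i < r" for i
  proof -
    have "(A *\<^sub>v v) $ i = (\<Sum>j<c. (if i \<in> S \<and> j = \<sigma> i then 1 else 0) * v $ j)"
      using A vc i entries by (simp add: scalar_prod_def lessThan_atLeast0)
    also have "\<dots> = (if i \<in> S then v $ \<sigma> i else 0)"
      using \<sigma> by (cases "i \<in> S") (auto simp: if_distrib[of "\<lambda>x. x * _"] cong: if_cong)
    finally show ?thesis .
  qed
  have "(\<Sum>i<r. (cmod ((A *\<^sub>v v) $ i))\<^sup>2) = (\<Sum>i<r. if i \<in> S then (cmod (v $ \<sigma> i))\<^sup>2 else 0)"
    using Av by (intro sum.cong) auto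
  also have "\<dots> = (\<Sum>i\<in>S. (cmod (v $ \<sigma> i))\<^sup>2)"
    using S by (intro sum.mono_neutral_cong_right) auto
  also have "\<dots> = (\<Sum>j\<in>\<sigma> ` S. (cmod (v $ j))\<^sup>2)"
    using inj by (simp add: sum.reindex)
  also have "\<dots> \<le> (\<Sum>j<c. (cmod (v $ j))\<^sup>2)"
    using \<sigma> by (intro sum_mono2) auto
  finally have "vnorm (A *\<^sub>v v) \<le> vnorm v"
    using A vc unfolding vnorm_def by simp
  with v1 show "vnorm (A *\<^sub>v v) \<le> 1" by simp
qed

lemma colstack_carrier: "is_tup d k X \<Longrightarrow> colstack k X \<in> carrier_mat (d * k) k"
  unfolding colstack_def is_tup_def by simp

lemma colstack_index:
  assumes "is_tup d k X" "u < d" "i < k" "j < k"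
  shows "colstack k X $$ (u * k + i, j) = X ! u $$ (i, j)"
  using assms block_index_less[of u d i k] unfolding colstack_def is_tup_def by simp

lemma is_tup_nth_carrier: "is_tup d k X \<Longrightarrow> w < d \<Longrightarrow> X ! w \<in> carrier_mat k k"
  unfolding is_tup_def by auto

lemma opnorm_nth_le_colnorm:
  assumes X: "is_tup d k X" and w: "w < d"
  shows "opnorm (X ! w) \<le> colnorm k X"
proof (rule opnorm_le)
  let ?C = "colstack k X"
  have Xw: "X ! w \<in> carrier_mat k k" using X w by (rule is_tup_nth_carrier)
  fix v assume v: "v \<in> carrier_vec (dim_col (X ! w))" and v1: "vnorm v \<le> 1"
  then have vc: "v \<in> carrier_vec k" using Xw by simp
  have "(?C *\<^sub>v v) $ (w * k + i) = (X ! w *\<^sub>v v) $ i" if "i < k" for i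
    using that vc Xw colstack_carrier[OF X] block_index_less[OF w that] colstack_index[OF X w that]
    by (simp add: scalar_prod_def lessThan_atLeast0)
  then have "(\<Sum>i<k. (cmod ((X ! w *\<^sub>v v) $ i))\<^sup>2) = (\<Sum>i<k. (cmod ((?C *\<^sub>v v) $ (w * k + i)))\<^sup>2)"
    by simp
  also have "\<dots> \<le> (\<Sum>u<d. \<Sum>i<k. (cmod ((?C *\<^sub>v v) $ (u * k + i)))\<^sup>2)"
    using w by (intro member_le_sum[where f = "\<lambda>u. \<Sum>i<k. (cmod ((?C *\<^sub>v v) $ (u * k + i)))\<^sup>2"])
      (auto intro: sum_nonneg)
  also have "\<dots> = (\<Sum>i<d * k. (cmod ((?C *\<^sub>v v) $ i))\<^sup>2)"
    by (rule sum_lessThan_mult_blocks[symmetric])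
  finally have "vnorm (X ! w *\<^sub>v v) \<le> vnorm (?C *\<^sub>v v)"
    using Xw colstack_carrier[OF X] unfolding vnorm_def by simp
  also have "\<dots> \<le> opnorm ?C * vnorm v"
    using colstack_carrier[OF X] vc by (intro vnorm_mult_mat_vec_le) simp
  also have "\<dots> \<le> colnorm k X"
    using v1 vnorm_nonneg[of v] opnorm_nonneg[of ?C] unfolding colnorm_def
    by (simp add: mult_left_le)
  finally show "vnorm (X ! w *\<^sub>v v) \<le> colnorm k X" .
qed

section \<open>Products interleaved with matrix units\<close>

lemma finite_words: "finite (words a l)"
  using finite_lists_length_eq[of "{..<a}" l] unfolding words_def by (simp add: conj_commute)

lemma card_words: "card (words a l) = a ^ l"
  using card_lists_length_eq[of "{..<a}" l] unfolding words_def by (simp add: conj_commute)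

lemma words_SucE:
  assumes "w \<in> words a (Suc l)"
  obtains x w' where "w = x # w'" "x < a" "w' \<in> words a l"
  using assms unfolding words_def by (cases w) auto

lemma nth_word_less: "w \<in> words a l \<Longrightarrow> t < l \<Longrightarrow> w ! t < a"
  unfolding words_def using nth_mem by fastforce

definition interleaved_prod ::
    "nat \<Rightarrow> (nat \<Rightarrow> nat \<Rightarrow> complex mat) \<Rightarrow> nat list \<Rightarrow> nat list \<Rightarrow> complex mat list \<Rightarrow> complex mat" where
  "interleaved_prod k U \<alpha> \<beta> Gs = mprod k (U (\<alpha> ! 0) (\<beta> ! 0) #
     concat (map (\<lambda>t. [Gs ! t, U (\<alpha> ! Suc t) (\<beta> ! Suc t)]) [0..<length Gs]))"

lemma emono_eq_interleaved_prod: "emono n = interleaved_prod n (Eunit n)"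
  by (intro ext) (simp add: emono_def interleaved_prod_def)

lemma interleaved_prod_Nil:
  "U (\<alpha> ! 0) (\<beta> ! 0) \<in> carrier_mat k k \<Longrightarrow> interleaved_prod k U \<alpha> \<beta> [] = U (\<alpha> ! 0) (\<beta> ! 0)"
  unfolding interleaved_prod_def by simp

lemma interleaved_prod_Cons:
  "interleaved_prod k U (a # \<alpha>) (b # \<beta>) (G # Gs) = U a b * (G * interleaved_prod k U \<alpha> \<beta> Gs)"
  unfolding interleaved_prod_def
  by (simp add: upt_conv_Cons map_Suc_upt[symmetric] o_def del: upt_Suc)

lemma interleaved_prod_carrier:
  assumes "\<And>a b. U a b \<in> carrier_mat k k" and "\<forall>G\<in>set Gs. G \<in> carrier_mat k k"
  shows "interleaved_prod k U \<alpha> \<beta> Gs \<in> carrier_mat k k"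
  unfolding interleaved_prod_def using assms by (intro mprod_carrier) auto

lemma opnorm_interleaved_prod_le_one:
  assumes "\<And>a b. U a b \<in> carrier_mat k k \<and> opnorm (U a b) \<le> 1"
    and "\<forall>G\<in>set Gs. G \<in> carrier_mat k k \<and> opnorm G \<le> 1"
  shows "opnorm (interleaved_prod k U \<alpha> \<beta> Gs) \<le> 1"
  unfolding interleaved_prod_def using assms by (intro opnorm_mprod_le_one) auto

lemma Eunit_carrier [simp]: "Eunit n a b \<in> carrier_mat n n"
  unfolding Eunit_def by simp

lemma Eunit_dims [simp]: "dim_row (Eunit n a b) = n" "dim_col (Eunit n a b) = n"
  unfolding Eunit_def by simp_all

lemma Eunit_index: "i < n \<Longrightarrow> j < n \<Longrightarrow> Eunit n a b $$ (i, j) = (if i = a \<and> j = b then 1 else 0)"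
  unfolding Eunit_def by simp

lemma emono_carrier: "\<forall>G\<in>set Gs. G \<in> carrier_mat n n \<Longrightarrow> emono n \<alpha> \<beta> Gs \<in> carrier_mat n n"
  unfolding emono_eq_interleaved_prod by (rule interleaved_prod_carrier) simp

lemma emono_Cons_index:
  assumes G: "G \<in> carrier_mat n n" and Gs: "\<forall>G\<in>set Gs. G \<in> carrier_mat n n"
    and "x < n" "y < n" "b < n"
  shows "emono n (a # \<alpha>) (b # \<beta>) (G # Gs) $$ (x, y) =
    (if x = a then \<Sum>z<n. G $$ (b, z) * emono n \<alpha> \<beta> Gs $$ (z, y) else 0)"
proof -
  let ?R = "emono n \<alpha> \<beta> Gs"
  have R: "?R \<in> carrier_mat n n" using Gs by (rule emono_carrier)
  have GR: "G * ?R \<in> carrier_mat n n" using G R by simp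
  have "emono n (a # \<alpha>) (b # \<beta>) (G # Gs) = Eunit n a b * (G * ?R)"
    by (simp add: emono_eq_interleaved_prod interleaved_prod_Cons)
  then have "emono n (a # \<alpha>) (b # \<beta>) (G # Gs) $$ (x, y) = (\<Sum>k<n. Eunit n a b $$ (x, k) * (G * ?R) $$ (k, y))"
    using mat_mult_index[OF Eunit_carrier GR assms(3,4)] by simp
  also have "\<dots> = (if x = a then (G * ?R) $$ (b, y) else 0)"
    using assms(3,5) by (simp add: Eunit_index if_distrib[of "\<lambda>u. u * _"] cong: if_cong)
  also have "\<dots> = (if x = a then \<Sum>z<n. G $$ (b, z) * ?R $$ (z, y) else 0)"
    using mat_mult_index[OF G R assms(5,4)] by simp
  finally show ?thesis .
qed

lemma emono_index:
  assumes "\<forall>G\<in>set Gs. G \<in> carrier_mat n n"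
    and "\<alpha> \<in> words n (Suc (length Gs))" "\<beta> \<in> words n (Suc (length Gs))" "x < n" "y < n"
  shows "emono n \<alpha> \<beta> Gs $$ (x, y) = (if x = \<alpha> ! 0 \<and> y = \<beta> ! length Gs
    then \<Prod>t<length Gs. Gs ! t $$ (\<beta> ! t, \<alpha> ! Suc t) else 0)"
  using assms
proof (induction Gs arbitrary: \<alpha> \<beta> x)
  case Nil
  then show ?case
    by (simp add: emono_eq_interleaved_prod interleaved_prod_Nil Eunit_index)
next
  case (Cons G Gs)
  obtain a \<alpha>' where \<alpha>: "\<alpha> = a # \<alpha>'" "\<alpha>' \<in> words n (Suc (length Gs))"
    using Cons.prems(2) by (auto elim: words_SucE)
  obtain b \<beta>' where \<beta>: "\<beta> = b # \<beta>'" "b < n" "\<beta>' \<in> words n (Suc (length Gs))"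
    using Cons.prems(3) by (auto elim: words_SucE)
  have G: "G \<in> carrier_mat n n" and Gs: "\<forall>G\<in>set Gs. G \<in> carrier_mat n n"
    using Cons.prems(1) by auto
  have a0: "\<alpha>' ! 0 < n" using \<alpha>(2) by (rule nth_word_less) simp
  have "emono n \<alpha> \<beta> (G # Gs) $$ (x, y) =
    (if x = a then \<Sum>z<n. G $$ (b, z) * (if z = \<alpha>' ! 0 \<and> y = \<beta>' ! length Gs
       then \<Prod>t<length Gs. Gs ! t $$ (\<beta>' ! t, \<alpha>' ! Suc t) else 0) else 0)"
    using Cons.IH[OF Gs \<alpha>(2) \<beta>(3) _ Cons.prems(5)] Cons.prems(4,5)
    by (simp add: \<alpha>(1) \<beta>(1,2) emono_Cons_index[OF G Gs])
  also have "\<dots> = (if x = a \<and> y = \<beta>' ! length Gs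
      then G $$ (b, \<alpha>' ! 0) * (\<Prod>t<length Gs. Gs ! t $$ (\<beta>' ! t, \<alpha>' ! Suc t)) else 0)"
    using a0 by (auto simp: if_distrib[of "\<lambda>u. _ * u"] cong: if_cong)
  also have "\<dots> = (if x = \<alpha> ! 0 \<and> y = \<beta> ! length (G # Gs)
      then \<Prod>t<length (G # Gs). (G # Gs) ! t $$ (\<beta> ! t, \<alpha> ! Suc t) else 0)"
    by (simp add: \<alpha>(1) \<beta>(1) prod.lessThan_Suc_shift del: prod.lessThan_Suc)
  finally show ?case .
qed

section \<open>Haagerup amplification of monomials\<close>

lemma ampl_Eunit_carrier [simp]: "ampl p (Eunit n a b) \<in> carrier_mat (p * n) (p * n)"
  unfolding ampl_def Eunit_def by simp

lemma ampl_Eunit_index: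
  assumes "i < p * n" "j < p * n"
  shows "ampl p (Eunit n a b) $$ (i, j) =
    (if i mod n = a \<and> b < n \<and> j = i div n * n + b then 1 else 0)"
proof -
  have "0 < n" using assms(1) by (cases n) auto
  then have "ampl p (Eunit n a b) $$ (i, j) =
      (if i mod n = a \<and> j div n = i div n \<and> j mod n = b then 1 else 0)"
    using assms unfolding ampl_def Eunit_def by auto
  then show ?thesis
    using block_eq_iff[of b n j "i div n"] \<open>0 < n\<close> by (cases "b < n") auto
qed

lemma opnorm_ampl_Eunit_le_one: "opnorm (ampl p (Eunit n a b)) \<le> 1"
proof (rule opnorm_selection_le_one)
  let ?S = "{i. i < p * n \<and> i mod n = a \<and> b < n}"
  show "inj_on (\<lambda>i. i div n * n + b) ?S"
  proof (rule inj_onI)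
    fix i i' assume "i \<in> ?S" "i' \<in> ?S" "i div n * n + b = i' div n * n + b"
    then have "i div n * n + i mod n = i' div n * n + i' mod n" by simp
    then show "i = i'" by (simp only: div_mult_mod_eq)
  qed
  show "(\<lambda>i. i div n * n + b) ` ?S \<subseteq> {..<p * n}"
    by (auto intro!: block_index_less less_mult_imp_div_less)
  show "\<And>i j. i < p * n \<Longrightarrow> j < p * n \<Longrightarrow> ampl p (Eunit n a b) $$ (i, j) =
      (if i \<in> ?S \<and> j = i div n * n + b then 1 else 0)"
    by (simp add: ampl_Eunit_index)
qed auto

lemma ampl_Eunit_mult_index:
  assumes M: "M \<in> carrier_mat (p * n) c" and i: "i < p * n" and j: "j < c" and b: "b < n"
  shows "(ampl p (Eunit n a b) * M) $$ (i, j) = (if i mod n = a then M $$ (i div n * n + b, j) else 0)"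
proof -
  have lt: "i div n * n + b < p * n"
    using i b by (intro block_index_less) (auto simp: less_mult_imp_div_less)
  have "(ampl p (Eunit n a b) * M) $$ (i, j) =
      (\<Sum>k<p * n. (if i mod n = a \<and> k = i div n * n + b then 1 else 0) * M $$ (k, j))"
    using M i j b by (simp add: mat_mult_index[of _ "p * n" "p * n"] ampl_Eunit_index)
  also have "\<dots> = (if i mod n = a then M $$ (i div n * n + b, j) else 0)"
    using lt by (auto simp: if_distrib[of "\<lambda>x. x * _"] cong: if_cong)
  finally show ?thesis .
qed

definition ampl_emono :: "nat \<Rightarrow> nat \<Rightarrow> nat list \<Rightarrow> nat list \<Rightarrow> complex mat list \<Rightarrow> complex mat" where
  "ampl_emono n p = interleaved_prod (p * n) (\<lambda>a b. ampl p (Eunit n a b))"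

lemma ampl_emono_carrier:
  "\<forall>H\<in>set Hs. H \<in> carrier_mat (p * n) (p * n) \<Longrightarrow> ampl_emono n p \<alpha> \<beta> Hs \<in> carrier_mat (p * n) (p * n)"
  unfolding ampl_emono_def by (rule interleaved_prod_carrier) simp

lemma opnorm_ampl_emono_le_one:
  "\<forall>H\<in>set Hs. H \<in> carrier_mat (p * n) (p * n) \<and> opnorm H \<le> 1 \<Longrightarrow> opnorm (ampl_emono n p \<alpha> \<beta> Hs) \<le> 1"
  unfolding ampl_emono_def by (rule opnorm_interleaved_prod_le_one) (simp add: opnorm_ampl_Eunit_le_one)

lemma ampl_one: "Z \<in> carrier_mat k k \<Longrightarrow> ampl 1 Z = Z"
  unfolding ampl_def by (rule eq_matI) auto

lemma ampl_emono_one: "ampl_emono n 1 = emono n"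
  unfolding ampl_emono_def emono_eq_interleaved_prod ampl_one[OF Eunit_carrier] by simp

definition path_blocks :: "nat \<Rightarrow> complex mat list \<Rightarrow> nat list \<Rightarrow> complex mat list" where
  "path_blocks n Hs ks = map (\<lambda>t. blk n (Hs ! t) (ks ! t) (ks ! Suc t)) [0..<length Hs]"

lemma length_path_blocks [simp]: "length (path_blocks n Hs ks) = length Hs"
  unfolding path_blocks_def by simp

lemma path_blocks_carrier: "\<forall>G\<in>set (path_blocks n Hs ks). G \<in> carrier_mat n n"
  unfolding path_blocks_def blk_def by auto

lemma path_blocks_Cons: "path_blocks n (H # Hs) (q # ks) = blk n H q (ks ! 0) # path_blocks n Hs ks"
  unfolding path_blocks_def by (simp add: upt_conv_Cons map_Suc_upt[symmetric] del: upt_Suc)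

lemma hamp_index:
  "i < m * n \<Longrightarrow> j < m * n \<Longrightarrow> hamp n m \<phi> Hs $$ (i, j) =
    (\<Sum>ks\<in>paths m (length Hs) (i div n) (j div n). \<phi> (path_blocks n Hs ks) $$ (i mod n, j mod n))"
  unfolding hamp_def path_blocks_def by simp

lemma finite_paths: "finite (paths m l q r)"
proof (rule finite_subset)
  show "paths m l q r \<subseteq> {ks. set ks \<subseteq> {..<m} \<and> length ks = Suc l}"
    unfolding paths_def by auto
qed (simp add: finite_lists_length_eq)

lemma paths_0: "q < m \<Longrightarrow> paths m 0 q r = (if q = r then {[q]} else {})"
  unfolding paths_def by (auto simp: length_Suc_conv)

lemma paths_Suc: "q < m \<Longrightarrow> paths m (Suc l) q r = Cons q ` (\<Union>u<m. paths m l u r)"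
  unfolding paths_def by (fastforce simp: length_Suc_conv image_iff)

lemma sum_paths_Suc:
  assumes "q < m"
  shows "(\<Sum>ks\<in>paths m (Suc l) q r. F ks) = (\<Sum>u<m. \<Sum>ks\<in>paths m l u r. F (q # ks))"
proof -
  have "(\<Sum>ks\<in>paths m (Suc l) q r. F ks) = (\<Sum>ks\<in>(\<Union>u<m. paths m l u r). F (q # ks))"
    unfolding paths_Suc[OF assms] by (simp add: sum.reindex)
  also have "\<dots> = (\<Sum>u<m. \<Sum>ks\<in>paths m l u r. F (q # ks))"
    by (rule sum.UNION_disjoint) (simp_all add: finite_paths, auto simp: paths_def)
  finally show ?thesis .
qed

lemma hamp_emono_index:
  assumes n: "0 < n" and Hs: "\<forall>H\<in>set Hs. H \<in> carrier_mat (p * n) (p * n)"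
    and \<alpha>: "\<alpha> \<in> words n (Suc (length Hs))" and \<beta>: "\<beta> \<in> words n (Suc (length Hs))"
    and i: "i < p * n" and j: "j < p * n"
  shows "hamp n p (emono n \<alpha> \<beta>) Hs $$ (i, j) = ampl_emono n p \<alpha> \<beta> Hs $$ (i, j)"
  unfolding hamp_index[OF i j] using Hs \<alpha> \<beta> i
proof (induction Hs arbitrary: \<alpha> \<beta> i)
  case Nil
  have "emono n \<alpha> \<beta> (path_blocks n [] ks) = Eunit n (\<alpha> ! 0) (\<beta> ! 0)" for ks
    by (simp add: path_blocks_def emono_eq_interleaved_prod interleaved_prod_Nil)
  moreover have "ampl_emono n p \<alpha> \<beta> [] = ampl p (Eunit n (\<alpha> ! 0) (\<beta> ! 0))"
    by (simp add: ampl_emono_def interleaved_prod_Nil)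
  ultimately show ?case
    using Nil.prems(4) n j by (auto simp: paths_0 less_mult_imp_div_less ampl_def)
next
  case (Cons H Hs)
  obtain a \<alpha>' where \<alpha>: "\<alpha> = a # \<alpha>'" "\<alpha>' \<in> words n (Suc (length Hs))"
    using Cons.prems(2) by (auto elim: words_SucE)
  obtain b \<beta>' where \<beta>: "\<beta> = b # \<beta>'" "b < n" "\<beta>' \<in> words n (Suc (length Hs))"
    using Cons.prems(3) by (auto elim: words_SucE)
  have H: "H \<in> carrier_mat (p * n) (p * n)" and Hs: "\<forall>H\<in>set Hs. H \<in> carrier_mat (p * n) (p * n)"
    using Cons.prems(1) by auto
  define q x r y where "q = i div n" and "x = i mod n" and "r = j div n" and "y = j mod n"
  have q: "q < p" and x: "x < n" and y: "y < n"
    using Cons.prems(4) n by (auto simp: q_def x_def y_def less_mult_imp_div_less)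
  let ?R = "ampl_emono n p \<alpha>' \<beta>' Hs"
  let ?E = "\<lambda>ks. emono n \<alpha>' \<beta>' (path_blocks n Hs ks)"
  have R: "?R \<in> carrier_mat (p * n) (p * n)" using Hs by (rule ampl_emono_carrier)
  have IH: "?R $$ (u * n + z, j) = (\<Sum>ks\<in>paths p (length Hs) u r. ?E ks $$ (z, y))"
    if "u < p" "z < n" for u z
    using Cons.IH[OF Hs \<alpha>(2) \<beta>(3) block_index_less[OF that]] that by (simp add: r_def y_def)
  have step: "emono n \<alpha> \<beta> (path_blocks n (H # Hs) (q # ks)) $$ (x, y) =
      (if x = a then \<Sum>z<n. blk n H q u $$ (b, z) * ?E ks $$ (z, y) else 0)"
    if "ks \<in> paths p (length Hs) u r" for u ks
    using that x y \<beta>(2)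
    by (simp add: \<alpha>(1) \<beta>(1) path_blocks_Cons paths_def emono_Cons_index blk_def path_blocks_carrier)
  have "ampl_emono n p \<alpha> \<beta> (H # Hs) $$ (i, j) = (ampl p (Eunit n a b) * (H * ?R)) $$ (i, j)"
    by (simp add: \<alpha>(1) \<beta>(1) ampl_emono_def interleaved_prod_Cons)
  also have "\<dots> = (if x = a then (H * ?R) $$ (q * n + b, j) else 0)"
    using ampl_Eunit_mult_index[OF mult_carrier_mat[OF H R] Cons.prems(4) j \<beta>(2)]
    by (simp add: q_def x_def)
  also have "\<dots> = (if x = a then \<Sum>u<p. \<Sum>z<n. blk n H q u $$ (b, z) * ?R $$ (u * n + z, j) else 0)"
    using mat_mult_index[OF H R block_index_less[OF q \<beta>(2)] j] \<beta>(2)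
    by (simp add: sum_lessThan_mult_blocks[of _ p n] blk_def)
  also have "\<dots> = (\<Sum>u<p. \<Sum>ks\<in>paths p (length Hs) u r.
      if x = a then \<Sum>z<n. blk n H q u $$ (b, z) * ?E ks $$ (z, y) else 0)"
    using IH by (simp add: sum_distrib_left sum.swap[of _ "{..<n}"])
  also have "\<dots> = (\<Sum>ks\<in>paths p (Suc (length Hs)) q r. emono n \<alpha> \<beta> (path_blocks n (H # Hs) ks) $$ (x, y))"
    using step by (simp add: sum_paths_Suc[OF q])
  finally show ?case by (simp add: q_def x_def r_def y_def)
qed

lemma hamp_coeff_expansion:
  assumes n: "0 < n" and cr: "coeff_rep d n fw hf" and \<omega>: "\<omega> \<in> words d (length Hs)"
    and Hs: "\<forall>H\<in>set Hs. H \<in> carrier_mat (p * n) (p * n)" and i: "i < p * n" and j: "j < p * n"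
  shows "hamp n p (fw \<omega>) Hs $$ (i, j) = (\<Sum>\<alpha>\<in>words n (Suc (length Hs)). \<Sum>\<beta>\<in>words n (Suc (length Hs)).
    hf \<alpha> \<beta> \<omega> * ampl_emono n p \<alpha> \<beta> Hs $$ (i, j))"
proof -
  let ?W = "words n (Suc (length Hs))" and ?P = "paths p (length Hs) (i div n) (j div n)"
  have "hamp n p (fw \<omega>) Hs $$ (i, j) = (\<Sum>ks\<in>?P. \<Sum>\<alpha>\<in>?W. \<Sum>\<beta>\<in>?W.
      hf \<alpha> \<beta> \<omega> * emono n \<alpha> \<beta> (path_blocks n Hs ks) $$ (i mod n, j mod n))"
    unfolding hamp_index[OF i j] using cr \<omega> n path_blocks_carrier
    by (intro sum.cong) (auto simp: coeff_rep_def)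
  also have "\<dots> = (\<Sum>\<alpha>\<in>?W. \<Sum>\<beta>\<in>?W. hf \<alpha> \<beta> \<omega> * hamp n p (emono n \<alpha> \<beta>) Hs $$ (i, j))"
    unfolding hamp_index[OF i j] sum_distrib_left
    by (subst sum.swap) (rule sum.cong[OF refl], rule sum.swap)
  also have "\<dots> = (\<Sum>\<alpha>\<in>?W. \<Sum>\<beta>\<in>?W. hf \<alpha> \<beta> \<omega> * ampl_emono n p \<alpha> \<beta> Hs $$ (i, j))"
    using hamp_emono_index[OF n Hs _ _ i j] by simp
  finally show ?thesis .
qed

section \<open>Complete boundedness of the Taylor terms\<close>

definition word_coords :: "complex mat list list \<Rightarrow> nat list \<Rightarrow> complex mat list" where
  "word_coords Xs \<omega> = map (\<lambda>t. Xs ! t ! (\<omega> ! t)) [0..<length Xs]"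

definition col_unit_ball :: "nat \<Rightarrow> nat \<Rightarrow> complex mat list set" where
  "col_unit_ball d k = {X. is_tup d k X \<and> colnorm k X \<le> 1}"

lemma length_word_coords [simp]: "length (word_coords Xs \<omega>) = length Xs"
  unfolding word_coords_def by simp

lemma word_coords_carrier:
  assumes "\<forall>X\<in>set Xs. is_tup d k X" and "\<omega> \<in> words d (length Xs)"
  shows "\<forall>H\<in>set (word_coords Xs \<omega>). H \<in> carrier_mat k k"
proof
  fix H assume "H \<in> set (word_coords Xs \<omega>)"
  then obtain t where t: "t < length Xs" and H: "H = Xs ! t ! (\<omega> ! t)"
    unfolding word_coords_def by auto
  have "is_tup d k (Xs ! t)" using assms(1) t by simp
  then show "H \<in> carrier_mat k k"
    unfolding H using is_tup_nth_carrier nth_word_less[OF assms(2) t] by blast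
qed

lemma opnorm_word_coords_le_one:
  assumes "set Xs \<subseteq> col_unit_ball d k" and "\<omega> \<in> words d (length Xs)"
  shows "\<forall>H\<in>set (word_coords Xs \<omega>). opnorm H \<le> 1"
proof
  fix H assume "H \<in> set (word_coords Xs \<omega>)"
  then obtain t where t: "t < length Xs" and H: "H = Xs ! t ! (\<omega> ! t)"
    unfolding word_coords_def by auto
  have "Xs ! t \<in> col_unit_ball d k" using assms(1) t by auto
  then have "is_tup d k (Xs ! t)" "colnorm k (Xs ! t) \<le> 1"
    unfolding col_unit_ball_def by auto
  then show "opnorm H \<le> 1"
    unfolding H using opnorm_nth_le_colnorm[OF _ nth_word_less[OF assms(2) t]] by fastforce
qed

lemma fl_amp_coeff_expansion:
  assumes n: "0 < n" and cr: "coeff_rep d n fw hf" and Xs: "\<forall>X\<in>set Xs. is_tup d (p * n) X"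
    and i: "i < p * n" and j: "j < p * n"
  shows "fl_amp d n fw p Xs $$ (i, j) =
    (\<Sum>(\<omega>, \<alpha>, \<beta>)\<in>words d (length Xs) \<times> words n (Suc (length Xs)) \<times> words n (Suc (length Xs)).
      hf \<alpha> \<beta> \<omega> * ampl_emono n p \<alpha> \<beta> (word_coords Xs \<omega>) $$ (i, j))"
proof -
  have "fl_amp d n fw p Xs $$ (i, j) = (\<Sum>\<omega>\<in>words d (length Xs). hamp n p (fw \<omega>) (word_coords Xs \<omega>) $$ (i, j))"
    using i j unfolding fl_amp_def word_coords_def by simp
  also have "\<dots> = (\<Sum>\<omega>\<in>words d (length Xs). \<Sum>\<alpha>\<in>words n (Suc (length Xs)). \<Sum>\<beta>\<in>words n (Suc (length Xs)).
      hf \<alpha> \<beta> \<omega> * ampl_emono n p \<alpha> \<beta> (word_coords Xs \<omega>) $$ (i, j))"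
    using hamp_coeff_expansion[OF n cr _ word_coords_carrier[OF Xs] i j] by simp
  finally show ?thesis by (simp add: sum.cartesian_product)
qed

lemma opnorm_fl_amp_le:
  assumes n: "0 < n" and cr: "coeff_rep d n fw hf" and Xs: "set Xs \<subseteq> col_unit_ball d (p * n)"
  shows "opnorm (fl_amp d n fw p Xs) \<le>
    (\<Sum>(\<omega>, \<alpha>, \<beta>)\<in>words d (length Xs) \<times> words n (Suc (length Xs)) \<times> words n (Suc (length Xs)).
      cmod (hf \<alpha> \<beta> \<omega>))"
proof -
  let ?K = "words d (length Xs) \<times> words n (Suc (length Xs)) \<times> words n (Suc (length Xs))"
  let ?B = "\<lambda>(\<omega>, \<alpha>, \<beta>). ampl_emono n p \<alpha> \<beta> (word_coords Xs \<omega>)"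
  have tup: "\<forall>X\<in>set Xs. is_tup d (p * n) X" using Xs unfolding col_unit_ball_def by auto
  have B: "?B k \<in> carrier_mat (p * n) (p * n) \<and> opnorm (?B k) \<le> 1" if kK: "k \<in> ?K" for k
  proof -
    obtain \<omega> \<alpha> \<beta> where k: "k = (\<omega>, \<alpha>, \<beta>)" and \<omega>: "\<omega> \<in> words d (length Xs)"
      using kK by (cases k) auto
    have "\<forall>H\<in>set (word_coords Xs \<omega>). H \<in> carrier_mat (p * n) (p * n) \<and> opnorm H \<le> 1"
      using word_coords_carrier[OF tup \<omega>] opnorm_word_coords_le_one[OF Xs \<omega>] by blast
    then show ?thesis
      unfolding k using ampl_emono_carrier opnorm_ampl_emono_le_one by auto
  qed
  have "opnorm (fl_amp d n fw p Xs) \<le> (\<Sum>k\<in>?K. cmod ((\<lambda>(\<omega>, \<alpha>, \<beta>). hf \<alpha> \<beta> \<omega>) k) * opnorm (?B k))"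
  proof (rule opnorm_lincomb_le)
    show "fl_amp d n fw p Xs \<in> carrier_mat (p * n) (p * n)" unfolding fl_amp_def by simp
    show "finite ?K" by (simp add: finite_words)
    show "?B k \<in> carrier_mat (p * n) (p * n)" if "k \<in> ?K" for k using B[OF that] by simp
    show "fl_amp d n fw p Xs $$ (i, j) = (\<Sum>k\<in>?K. (\<lambda>(\<omega>, \<alpha>, \<beta>). hf \<alpha> \<beta> \<omega>) k * ?B k $$ (i, j))"
      if "i < p * n" "j < p * n" for i j
      unfolding fl_amp_coeff_expansion[OF n cr tup that] by (intro sum.cong) auto
  qed
  also have "\<dots> \<le> (\<Sum>(\<omega>, \<alpha>, \<beta>)\<in>?K. cmod (hf \<alpha> \<beta> \<omega>))"
  proof (rule sum_mono)
    fix k assume "k \<in> ?K"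
    then show "cmod ((\<lambda>(\<omega>, \<alpha>, \<beta>). hf \<alpha> \<beta> \<omega>) k) * opnorm (?B k) \<le> (\<lambda>(\<omega>, \<alpha>, \<beta>). cmod (hf \<alpha> \<beta> \<omega>)) k"
      using B[of k] by (auto simp: mult_left_le)
  qed
  finally show ?thesis .
qed

text \<open>Without the bound \<open>opnorm_fl_amp_le\<close> the supremum defining \<open>cbnorm\<close> would be the
  unspecified \<open>Sup\<close> of an unbounded set of reals.\<close>

lemma opnorm_fl_amp_le_cbnorm:
  assumes n: "0 < n" and cr: "coeff_rep d n fw hf" and p: "p \<ge> 1"
    and Xs: "set Xs \<subseteq> col_unit_ball d (p * n)"
  shows "opnorm (fl_amp d n fw p Xs) \<le> cbnorm d n fw (length Xs)"
proof -
  let ?M = "\<Sum>(\<omega>, \<alpha>, \<beta>)\<in>words d (length Xs) \<times> words n (Suc (length Xs)) \<times> words n (Suc (length Xs)).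
      cmod (hf \<alpha> \<beta> \<omega>)"
  let ?S = "{opnorm (fl_amp d n fw p' Xs') | p' Xs'. p' \<ge> 1 \<and> length Xs' = length Xs \<and>
      (\<forall>X\<in>set Xs'. is_tup d (p' * n) X \<and> colnorm (p' * n) X \<le> 1)}"
  have "bdd_above ?S"
  proof (rule bdd_aboveI[where M = ?M])
    fix x assume "x \<in> ?S"
    then obtain p' Xs' where "x = opnorm (fl_amp d n fw p' Xs')" "length Xs' = length Xs"
      "set Xs' \<subseteq> col_unit_ball d (p' * n)"
      unfolding col_unit_ball_def by blast
    then show "x \<le> ?M" using opnorm_fl_amp_le[OF n cr] by metis
  qed
  moreover have "opnorm (fl_amp d n fw p Xs) \<in> ?S"
    using p Xs unfolding col_unit_ball_def by blast
  ultimately show ?thesis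
    unfolding cbnorm_def by (rule cSup_upper[rotated])
qed

lemma zero_tup_in_col_unit_ball: "replicate d (0\<^sub>m k k) \<in> col_unit_ball d k"
proof -
  have tup: "is_tup d k (replicate d (0\<^sub>m k k))" unfolding is_tup_def by auto
  have "colnorm k (replicate d (0\<^sub>m k k)) \<le> 1"
    unfolding colnorm_def
    by (rule opnorm_selection_le_one[where S = "{}" and \<sigma> = id, OF colstack_carrier[OF tup]])
      (auto simp: colstack_def less_mult_imp_div_less)
  with tup show ?thesis unfolding col_unit_ball_def by simp
qed

lemma cbnorm_nonneg:
  assumes "0 < n" and "coeff_rep d n fw hf"
  shows "0 \<le> cbnorm d n fw l"
  using opnorm_fl_amp_le_cbnorm[OF assms, of 1 "replicate l (replicate d (0\<^sub>m n n))"]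
    zero_tup_in_col_unit_ball opnorm_nonneg order_trans
  by fastforce

section \<open>Recovering the coefficients\<close>

definition unit_tup :: "nat \<Rightarrow> nat \<Rightarrow> nat \<Rightarrow> nat \<Rightarrow> nat \<Rightarrow> complex mat list" where
  "unit_tup n d w x y = map (\<lambda>v. if v = w then Eunit n x y else 0\<^sub>m n n) [0..<d]"

lemma unit_tup_in_col_unit_ball:
  assumes w: "w < d" and x: "x < n" and y: "y < n"
  shows "unit_tup n d w x y \<in> col_unit_ball d n"
proof -
  have tup: "is_tup d n (unit_tup n d w x y)" unfolding is_tup_def unit_tup_def by auto
  have "colnorm n (unit_tup n d w x y) \<le> 1"
    unfolding colnorm_def
  proof (rule opnorm_selection_le_one[where S = "{w * n + x}" and \<sigma> = "\<lambda>_. y"])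
    show "colstack n (unit_tup n d w x y) \<in> carrier_mat (d * n) n"
      using tup by (rule colstack_carrier)
    show "{w * n + x} \<subseteq> {..<d * n}" using block_index_less[OF w x] by simp
    fix i j assume i: "i < d * n" and j: "j < n"
    then have "colstack n (unit_tup n d w x y) $$ (i, j) =
        (if (i div n = w \<and> i mod n = x) \<and> j = y then 1 else 0)"
      by (auto simp: colstack_def unit_tup_def Eunit_index less_mult_imp_div_less)
    then show "colstack n (unit_tup n d w x y) $$ (i, j) = (if i \<in> {w * n + x} \<and> j = y then 1 else 0)"
      unfolding block_eq_iff[OF x] by simp
  qed (use y in auto)
  with tup show ?thesis unfolding col_unit_ball_def by simp
qed

text \<open>The \<open>t\<close>-th probe tuple carries \<open>E_{\<beta>_t,\<alpha>_(t+1)}\<close> in slot \<open>\<omega>_t\<close>; at level 1 the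
  \<open>(\<alpha>_0, \<beta>_l)\<close> entry of \<open>f_l\<close> at the probe tuples is the coefficient of \<open>(\<alpha>, \<beta>, \<omega>)\<close>.\<close>

definition probe_tuples :: "nat \<Rightarrow> nat \<Rightarrow> nat list \<Rightarrow> nat list \<Rightarrow> nat list \<Rightarrow> complex mat list list" where
  "probe_tuples n d \<alpha> \<beta> \<omega> = map (\<lambda>t. unit_tup n d (\<omega> ! t) (\<beta> ! t) (\<alpha> ! Suc t)) [0..<length \<omega>]"

lemma probe_tuples_in_col_unit_ball:
  assumes "\<alpha> \<in> words n (Suc l)" "\<beta> \<in> words n (Suc l)" "\<omega> \<in> words d l"
  shows "set (probe_tuples n d \<alpha> \<beta> \<omega>) \<subseteq> col_unit_ball d n"
  using assms unfolding probe_tuples_def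
  by (auto intro!: unit_tup_in_col_unit_ball nth_word_less simp: words_def)

lemma length_probe_tuples [simp]: "length (probe_tuples n d \<alpha> \<beta> \<omega>) = length \<omega>"
  unfolding probe_tuples_def by simp

lemma word_coords_probe_tuples:
  assumes "\<omega> \<in> words d l" and "\<omega>0 \<in> words d l"
  shows "word_coords (probe_tuples n d \<alpha>0 \<beta>0 \<omega>0) \<omega> =
    map (\<lambda>t. if \<omega> ! t = \<omega>0 ! t then Eunit n (\<beta>0 ! t) (\<alpha>0 ! Suc t) else 0\<^sub>m n n) [0..<l]"
  using assms nth_word_less[OF assms(1)]
  by (simp add: word_coords_def probe_tuples_def unit_tup_def words_def)

lemma prod_indicator: "(\<Prod>t<(l::nat). if P t then 1 else 0 :: 'a::comm_semiring_1) = (if \<forall>t<l. P t then 1 else 0)"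
  by (induction l) (auto simp: less_Suc_eq)

lemma probe_conditions_iff:
  assumes "length \<alpha> = Suc l" "length \<alpha>0 = Suc l" "length \<beta> = Suc l" "length \<beta>0 = Suc l"
    "length \<omega> = l" "length \<omega>0 = l"
  shows "(\<alpha>0 ! 0 = \<alpha> ! 0 \<and> \<beta>0 ! l = \<beta> ! l \<and>
      (\<forall>t<l. \<omega> ! t = \<omega>0 ! t \<and> \<beta> ! t = \<beta>0 ! t \<and> \<alpha> ! Suc t = \<alpha>0 ! Suc t)) \<longleftrightarrow>
    (\<omega>, \<alpha>, \<beta>) = (\<omega>0, \<alpha>0, \<beta>0)"
proof -
  have \<alpha>: "\<alpha> = \<alpha>0 \<longleftrightarrow> \<alpha>0 ! 0 = \<alpha> ! 0 \<and> (\<forall>t<l. \<alpha> ! Suc t = \<alpha>0 ! Suc t)"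
    using assms by (auto simp: list_eq_iff_nth_eq All_less_Suc2)
  have \<beta>: "\<beta> = \<beta>0 \<longleftrightarrow> \<beta>0 ! l = \<beta> ! l \<and> (\<forall>t<l. \<beta> ! t = \<beta>0 ! t)"
    using assms by (auto simp: list_eq_iff_nth_eq All_less_Suc)
  have \<omega>: "\<omega> = \<omega>0 \<longleftrightarrow> (\<forall>t<l. \<omega> ! t = \<omega>0 ! t)"
    using assms by (simp add: list_eq_iff_nth_eq)
  show ?thesis unfolding prod.inject \<alpha> \<beta> \<omega> all_conj_distrib by blast
qed

lemma emono_probe_tuples_index:
  assumes \<alpha>0: "\<alpha>0 \<in> words n (Suc l)" and \<beta>0: "\<beta>0 \<in> words n (Suc l)" and \<omega>0: "\<omega>0 \<in> words d l"
    and \<alpha>: "\<alpha> \<in> words n (Suc l)" and \<beta>: "\<beta> \<in> words n (Suc l)" and \<omega>: "\<omega> \<in> words d l"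
  shows "emono n \<alpha> \<beta> (word_coords (probe_tuples n d \<alpha>0 \<beta>0 \<omega>0) \<omega>) $$ (\<alpha>0 ! 0, \<beta>0 ! l) =
    (if (\<omega>, \<alpha>, \<beta>) = (\<omega>0, \<alpha>0, \<beta>0) then 1 else 0)"
proof -
  let ?G = "map (\<lambda>t. if \<omega> ! t = \<omega>0 ! t then Eunit n (\<beta>0 ! t) (\<alpha>0 ! Suc t) else 0\<^sub>m n n) [0..<l]"
  have G: "\<forall>G\<in>set ?G. G \<in> carrier_mat n n" by auto
  have entry: "?G ! t $$ (\<beta> ! t, \<alpha> ! Suc t) =
      (if \<omega> ! t = \<omega>0 ! t \<and> \<beta> ! t = \<beta>0 ! t \<and> \<alpha> ! Suc t = \<alpha>0 ! Suc t then 1 else 0)" if "t < l" for t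
    using that nth_word_less[OF \<alpha>, of "Suc t"] nth_word_less[OF \<beta>, of t] by (auto simp: Eunit_index)
  have prod: "(\<Prod>t<l. ?G ! t $$ (\<beta> ! t, \<alpha> ! Suc t)) =
      (if \<forall>t<l. \<omega> ! t = \<omega>0 ! t \<and> \<beta> ! t = \<beta>0 ! t \<and> \<alpha> ! Suc t = \<alpha>0 ! Suc t then 1 else 0)"
    unfolding prod_indicator[symmetric] by (intro prod.cong refl) (rule entry, simp)
  have "emono n \<alpha> \<beta> ?G $$ (\<alpha>0 ! 0, \<beta>0 ! l) = (if \<alpha>0 ! 0 = \<alpha> ! 0 \<and> \<beta>0 ! l = \<beta> ! l
      then \<Prod>t<l. ?G ! t $$ (\<beta> ! t, \<alpha> ! Suc t) else 0)"
    by (rule emono_index[OF G, unfolded length_map length_upt diff_zero,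
        OF \<alpha> \<beta> nth_word_less[OF \<alpha>0 zero_less_Suc] nth_word_less[OF \<beta>0 lessI]])
  also have "\<dots> = (if \<alpha>0 ! 0 = \<alpha> ! 0 \<and> \<beta>0 ! l = \<beta> ! l \<and>
      (\<forall>t<l. \<omega> ! t = \<omega>0 ! t \<and> \<beta> ! t = \<beta>0 ! t \<and> \<alpha> ! Suc t = \<alpha>0 ! Suc t) then 1 else 0)"
    unfolding prod by simp
  also have "\<dots> = (if (\<omega>, \<alpha>, \<beta>) = (\<omega>0, \<alpha>0, \<beta>0) then 1 else 0)"
    using \<alpha>0 \<beta>0 \<omega>0 \<alpha> \<beta> \<omega> unfolding words_def by (subst probe_conditions_iff) auto
  finally show ?thesis using word_coords_probe_tuples[OF \<omega> \<omega>0] by simp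
qed

lemma fl_amp_probe_tuples_index:
  assumes n: "0 < n" and cr: "coeff_rep d n fw hf"
    and \<alpha>0: "\<alpha>0 \<in> words n (Suc l)" and \<beta>0: "\<beta>0 \<in> words n (Suc l)" and \<omega>0: "\<omega>0 \<in> words d l"
  shows "fl_amp d n fw 1 (probe_tuples n d \<alpha>0 \<beta>0 \<omega>0) $$ (\<alpha>0 ! 0, \<beta>0 ! l) = hf \<alpha>0 \<beta>0 \<omega>0"
proof -
  let ?K = "words d l \<times> words n (Suc l) \<times> words n (Suc l)"
  have tup: "\<forall>X\<in>set (probe_tuples n d \<alpha>0 \<beta>0 \<omega>0). is_tup d (1 * n) X"
    using probe_tuples_in_col_unit_ball[OF \<alpha>0 \<beta>0 \<omega>0] unfolding col_unit_ball_def by auto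
  have ij: "\<alpha>0 ! 0 < 1 * n" "\<beta>0 ! l < 1 * n"
    using nth_word_less[OF \<alpha>0] nth_word_less[OF \<beta>0] by auto
  have l: "length \<omega>0 = l" using \<omega>0 by (simp add: words_def)
  have "fl_amp d n fw 1 (probe_tuples n d \<alpha>0 \<beta>0 \<omega>0) $$ (\<alpha>0 ! 0, \<beta>0 ! l) =
      (\<Sum>(\<omega>, \<alpha>, \<beta>)\<in>?K. hf \<alpha> \<beta> \<omega> * emono n \<alpha> \<beta> (word_coords (probe_tuples n d \<alpha>0 \<beta>0 \<omega>0) \<omega>) $$ (\<alpha>0 ! 0, \<beta>0 ! l))"
    using fl_amp_coeff_expansion[OF n cr tup ij] unfolding ampl_emono_one length_probe_tuples l .
  also have "\<dots> = (\<Sum>k\<in>?K. if k = (\<omega>0, \<alpha>0, \<beta>0) then hf \<alpha>0 \<beta>0 \<omega>0 else 0)"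
    using emono_probe_tuples_index[OF \<alpha>0 \<beta>0 \<omega>0] by (intro sum.cong refl) (auto split: if_splits)
  also have "\<dots> = hf \<alpha>0 \<beta>0 \<omega>0"
    using \<alpha>0 \<beta>0 \<omega>0 by (simp add: finite_words)
  finally show ?thesis .
qed

lemma cmod_coeff_le_cbnorm:
  assumes n: "0 < n" and cr: "coeff_rep d n fw hf"
    and \<alpha>: "\<alpha> \<in> words n (Suc l)" and \<beta>: "\<beta> \<in> words n (Suc l)" and \<omega>: "\<omega> \<in> words d l"
  shows "cmod (hf \<alpha> \<beta> \<omega>) \<le> cbnorm d n fw l"
proof -
  let ?F = "fl_amp d n fw 1 (probe_tuples n d \<alpha> \<beta> \<omega>)"
  have "cmod (hf \<alpha> \<beta> \<omega>) = cmod (?F $$ (\<alpha> ! 0, \<beta> ! l))"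
    using fl_amp_probe_tuples_index[OF n cr \<alpha> \<beta> \<omega>] by (simp only:)
  also have "\<dots> \<le> opnorm ?F"
    using nth_word_less[OF \<alpha>] nth_word_less[OF \<beta>] by (intro cmod_index_le_opnorm) (auto simp: fl_amp_def)
  also have "\<dots> \<le> cbnorm d n fw l"
    using opnorm_fl_amp_le_cbnorm[OF n cr order.refl, of "probe_tuples n d \<alpha> \<beta> \<omega>"]
      probe_tuples_in_col_unit_ball[OF \<alpha> \<beta> \<omega>] \<omega>
    by (simp add: words_def)
  finally show ?thesis .
qed

lemma sum_sq_coeff_le_cbnorm:
  assumes "0 < n" and "coeff_rep d n fw hf"
  shows "(\<Sum>\<alpha>\<in>words n (Suc l). \<Sum>\<beta>\<in>words n (Suc l). \<Sum>\<omega>\<in>words d l. (cmod (hf \<alpha> \<beta> \<omega>))\<^sup>2)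
    \<le> real (n ^ Suc l) * real (n ^ Suc l) * real (d ^ l) * (cbnorm d n fw l)\<^sup>2"
proof -
  have "(\<Sum>\<alpha>\<in>words n (Suc l). \<Sum>\<beta>\<in>words n (Suc l). \<Sum>\<omega>\<in>words d l. (cmod (hf \<alpha> \<beta> \<omega>))\<^sup>2)
      \<le> (\<Sum>\<alpha>\<in>words n (Suc l). \<Sum>\<beta>\<in>words n (Suc l). \<Sum>\<omega>\<in>words d l. (cbnorm d n fw l)\<^sup>2)"
    using cmod_coeff_le_cbnorm[OF assms] by (intro sum_mono power_mono) auto
  then show ?thesis by (simp add: card_words mult.assoc)
qed

lemma powr_inverse_power: "0 \<le> x \<Longrightarrow> 0 < k \<Longrightarrow> (x ^ k) powr (1 / real k) = x"
  by (simp add: powr_inverse_root real_root_pos2)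

lemma powr_le_of_le_power_mult:
  fixes S M c :: real
  assumes "0 \<le> S" "0 \<le> M" "0 \<le> c" "0 < l" and S: "S \<le> M ^ (2 * l) * c\<^sup>2"
  shows "S powr (1 / (2 * real l)) \<le> M * c powr (1 / real l)"
proof -
  have M: "(M ^ (2 * l)) powr (1 / (2 * real l)) = M"
    using powr_inverse_power[of M "2 * l"] assms by simp
  have "(c\<^sup>2) powr (1 / (2 * real l)) = ((c\<^sup>2) powr (1 / 2)) powr (1 / real l)"
    by (subst powr_powr) simp
  also have "\<dots> = c powr (1 / real l)"
    using assms(3) by (simp add: square_powr_half abs_of_nonneg)
  finally have c: "(c\<^sup>2) powr (1 / (2 * real l)) = c powr (1 / real l)" .
  have "S powr (1 / (2 * real l)) \<le> (M ^ (2 * l) * c\<^sup>2) powr (1 / (2 * real l))"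
    using assms by (intro powr_mono2) auto
  also have "\<dots> = M * c powr (1 / real l)"
    using assms by (simp add: powr_mult M c)
  finally show ?thesis .
qed

lemma words_count_le_power:
  assumes "1 \<le> n" and "1 \<le> l"
  shows "real (n ^ Suc l) * real (n ^ Suc l) * real (d ^ l) \<le> (real n ^ 2 * (real d + 1)) ^ (2 * l)"
proof -
  have lhs: "real (n ^ Suc l) * real (n ^ Suc l) * real (d ^ l) = real n ^ (Suc l + Suc l) * real d ^ l"
    by (simp add: power_add)
  have rhs: "(real n ^ 2 * (real d + 1)) ^ (2 * l) = real n ^ (4 * l) * (real d + 1) ^ (2 * l)"
    by (simp add: power_mult_distrib flip: power_mult)
  have "real n ^ (Suc l + Suc l) \<le> real n ^ (4 * l)"
    using assms by (intro power_increasing) auto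
  moreover have "real d ^ l \<le> (real d + 1) ^ (2 * l)"
    by (rule order_trans[OF power_mono power_increasing[of l "2 * l"]]) auto
  ultimately show ?thesis
    unfolding lhs rhs by (intro mult_mono) auto
qed

theorem mainTheorem11:
  fixes d n :: nat and Y :: "complex mat list"
    and \<Omega> :: "(nat \<times> complex mat list) set"
    and f :: "nat \<Rightarrow> complex mat list \<Rightarrow> complex mat"
    and fw :: "nat list \<Rightarrow> complex mat list \<Rightarrow> complex mat"
    and hf :: "nat list \<Rightarrow> nat list \<Rightarrow> nat list \<Rightarrow> complex"
  assumes "(n, Y) \<in> NCspace d"
    and "uniformly_analytic d \<Omega> f"
    and "(n, Y) \<in> \<Omega>"
    and "taylor_taylor d n Y \<Omega> f fw"
    and "coeff_rep d n fw hf"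
  shows "\<exists>C>0. \<forall>l::nat. l \<ge> 1 \<longrightarrow>
    (\<Sum>\<alpha>\<in>words n (Suc l). \<Sum>\<beta>\<in>words n (Suc l). \<Sum>\<omega>\<in>words d l. (cmod (hf \<alpha> \<beta> \<omega>))\<^sup>2)
        powr (1 / (2 * real l))
      \<le> C * cbnorm d n fw l powr (1 / real l)"
proof -
  \<comment> \<open>Analyticity only guarantees that the Taylor--Taylor coefficients exist; the estimate uses
    nothing but \<open>n \<ge> 1\<close> and the coefficient representation.\<close>
  have n: "1 \<le> n" using assms(1) by (simp add: NCspace_def)
  define C where "C = real n ^ 2 * (real d + 1)"
  show ?thesis
  proof (intro exI[of _ C] conjI allI impI)
    show "0 < C" using n by (simp add: C_def)
    fix l :: nat assume l: "l \<ge> 1"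
    have "(\<Sum>\<alpha>\<in>words n (Suc l). \<Sum>\<beta>\<in>words n (Suc l). \<Sum>\<omega>\<in>words d l. (cmod (hf \<alpha> \<beta> \<omega>))\<^sup>2)
        \<le> real (n ^ Suc l) * real (n ^ Suc l) * real (d ^ l) * (cbnorm d n fw l)\<^sup>2"
      using n by (intro sum_sq_coeff_le_cbnorm[OF _ assms(5)]) simp
    also have "\<dots> \<le> C ^ (2 * l) * (cbnorm d n fw l)\<^sup>2"
      unfolding C_def using words_count_le_power[OF n l] by (rule mult_right_mono) simp
    finally show "(\<Sum>\<alpha>\<in>words n (Suc l). \<Sum>\<beta>\<in>words n (Suc l). \<Sum>\<omega>\<in>words d l. (cmod (hf \<alpha> \<beta> \<omega>))\<^sup>2)
        powr (1 / (2 * real l)) \<le> C * cbnorm d n fw l powr (1 / real l)"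
      using n l cbnorm_nonneg[OF _ assms(5)]
      by (intro powr_le_of_le_power_mult sum_nonneg) (auto simp: C_def)
  qed
qed

end
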